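(* Let $S \subseteq \mathbb{R}^n$ be nonempty, closed and convex, let $F = (F_1,\dots,F_m)^\top \colon S \to \mathbb{R}^m$ with each $F_i$ convex (and continuous), let $\ell > 0$, and define \[ u_\ell(x) := \max_{y \in S} \min_{i = 1,\dots,m} \left\{F_i(x) - F_i(y) - \frac{\ell}{2}\|x - y\|^2\right\}, \quad x \in S. \] Then $u_\ell(x) \ge 0$ for all $x \in S$. Moreover, $x \in S$ is weakly Pareto optimal for $\min_{x\in S} F(x)$ if and only if $u_\ell(x) = 0$.
   Context: $\|\cdot\|$ is the Euclidean norm. For $u,v\in\mathbb{R}^m$, $u<v$ means $u_i<v_i$ for all $i$. A point $x^\ast \in S$ is weakly Pareto optimal for $\min_{x\in S} F(x)$ if there is no $x \in S$ with $F(x) < F(x^\ast)$. *)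

theory Defs
  imports "HOL-Analysis.Analysis"
begin

text \<open>Objectives are indexed by a finite (hence nonempty) type 'm, i.e. F = (F_i)_{i in 'm}.\<close>

definition weakly_pareto_optimal ::
    "'a set \<Rightarrow> ('m::finite \<Rightarrow> 'a \<Rightarrow> real) \<Rightarrow> 'a \<Rightarrow> bool" where
  "weakly_pareto_optimal S F x \<longleftrightarrow>
     x \<in> S \<and> \<not> (\<exists>y\<in>S. \<forall>i. F i y < F i x)"

text \<open>The merit function u_l(x) = max_{y in S} min_i (F_i x - F_i y - l/2 ||x - y||^2).
  The maximum is written as a supremum (it is attained under the hypotheses).\<close>

definition u_merit ::
    "'a::real_normed_vector set \<Rightarrow> ('m::finite \<Rightarrow> 'a \<Rightarrow> real) \<Rightarrow> real \<Rightarrow> 'a \<Rightarrow> real" where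
  "u_merit S F l x =
     (SUP y\<in>S. Min (range (\<lambda>i. F i x - F i y - l / 2 * (norm (x - y))\<^sup>2)))"

end

theory Submission
  imports Defs
begin

text \<open>Taking y = x shows u_l(x) \<ge> 0. If x is weakly Pareto optimal, every y \<in> S has an index i
  with F_i(y) \<ge> F_i(x), so every term of the supremum is \<le> 0. If instead some y \<in> S satisfies
  F(y) < F(x), say with margin \<delta> > 0, then by convexity the point z = x + t (y - x) decreases
  every F_i by at least t \<delta>, while the penalty is only l t^2 ||y - x||^2 / 2; for small t > 0 this
  gives a positive term, so u_l(x) > 0. Since u_l is a supremum, we must also know it is finite:
  a convex continuous function decreases at most linearly, which the quadratic penalty beats.\<close>

definition merit_gap :: "('m::finite \<Rightarrow> 'a \<Rightarrow> real) \<Rightarrow> real \<Rightarrow> 'a::real_normed_vector \<Rightarrow> 'a \<Rightarrow> real"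
  where "merit_gap F l x y = Min (range (\<lambda>i. F i x - F i y - l / 2 * (norm (x - y))\<^sup>2))"

lemma u_merit_eq_SUP_merit_gap: "u_merit S F l x = (SUP y\<in>S. merit_gap F l x y)"
  by (simp add: u_merit_def merit_gap_def)

lemma merit_gap_le: "merit_gap F l x y \<le> F i x - F i y - l / 2 * (norm (x - y))\<^sup>2"
  unfolding merit_gap_def by (rule Min_le) auto

lemma merit_gap_self [simp]: "merit_gap F l x x = 0"
  by (simp add: merit_gap_def)

lemma merit_gap_pos_iff: "merit_gap F l x y > 0 \<longleftrightarrow> (\<forall>i. F i x - F i y - l / 2 * (norm (x - y))\<^sup>2 > 0)"
  unfolding merit_gap_def by (subst Min_gr_iff) auto

lemma convex_on_decrease_linear_bound:
  fixes f :: "'a::real_normed_vector \<Rightarrow> real"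
  assumes "convex S" "convex_on S f" "continuous_on S f" "x \<in> S"
  obtains r where "r > 0" "\<And>y. y \<in> S \<Longrightarrow> f x - f y \<le> 1 + norm (y - x) / r"
proof -
  obtain d where "d > 0" and d: "\<And>z. z \<in> S \<Longrightarrow> dist z x < d \<Longrightarrow> f z > f x - 1"
    using assms(3,4) unfolding continuous_on_iff
    by (metis dist_real_def abs_less_iff zero_less_one add.commute diff_less_eq minus_diff_eq)
  define r where "r = d / 2"
  have "r > 0" "r < d" using \<open>d > 0\<close> by (auto simp: r_def)
  have "f x - f y \<le> 1 + norm (y - x) / r" if "y \<in> S" for y
  proof (cases "norm (y - x) < d")
    case True
    moreover have "norm (y - x) / r \<ge> 0" using \<open>r > 0\<close> by simp
    ultimately show ?thesis using d[OF \<open>y \<in> S\<close>] by (simp add: dist_norm)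
  next
    case False
    define D where "D = norm (y - x)"
    define t where "t = r / D"
    have "D > 0" using False \<open>d > 0\<close> unfolding D_def by linarith
    have t: "0 < t" "t < 1"
      using \<open>r > 0\<close> \<open>r < d\<close> \<open>D > 0\<close> False[folded D_def] by (simp_all add: t_def field_simps)
    define z where "z = (1 - t) *\<^sub>R x + t *\<^sub>R y"
    have "z \<in> S" using assms(1,4) \<open>y \<in> S\<close> t by (simp add: z_def convexD)
    have "z - x = t *\<^sub>R (y - x)" by (simp add: z_def algebra_simps)
    then have "dist z x = t * D" using t by (simp add: D_def dist_norm)
    then have "f z > f x - 1"
      using d[OF \<open>z \<in> S\<close>] \<open>D > 0\<close> \<open>r < d\<close> by (simp add: t_def)
    moreover have "f z \<le> (1 - t) * f x + t * f y"
      using convex_onD[OF assms(2), of t x y] t assms(4) \<open>y \<in> S\<close> by (simp add: z_def)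
    ultimately have "t * (f x - f y) < 1" by (simp add: algebra_simps)
    then have "f x - f y < D / r"
      using t \<open>r > 0\<close> \<open>D > 0\<close> by (simp add: t_def field_simps)
    then show ?thesis by (simp add: D_def)
  qed
  with \<open>r > 0\<close> show thesis by (rule that)
qed

lemma linear_minus_quadratic_le:
  fixes a l r :: real
  assumes "l > 0" "r > 0"
  shows "a / r - l / 2 * a\<^sup>2 \<le> 1 / (2 * l * r\<^sup>2)"
proof -
  have "0 \<le> l / 2 * (a - 1 / (l * r))\<^sup>2" using assms by simp
  also have "\<dots> = l / 2 * a\<^sup>2 - a / r + 1 / (2 * l * r\<^sup>2)"
    using assms by (simp add: power2_eq_square field_simps)
  finally show ?thesis by simp
qed

lemma bdd_above_merit_gap:
  fixes F :: "'m::finite \<Rightarrow> 'a::real_normed_vector \<Rightarrow> real"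
  assumes "convex S" "\<And>i. convex_on S (F i)" "\<And>i. continuous_on S (F i)" "x \<in> S" "l > 0"
  shows "bdd_above (merit_gap F l x ` S)"
proof -
  obtain r where "r > 0" and r: "\<And>y. y \<in> S \<Longrightarrow> F undefined x - F undefined y \<le> 1 + norm (y - x) / r"
    using convex_on_decrease_linear_bound[OF assms(1,2,3,4)] by blast
  have "merit_gap F l x y \<le> 1 + 1 / (2 * l * r\<^sup>2)" if "y \<in> S" for y
  proof -
    have "merit_gap F l x y \<le> F undefined x - F undefined y - l / 2 * (norm (y - x))\<^sup>2"
      using merit_gap_le by (metis norm_minus_commute)
    also have "\<dots> \<le> 1 + (norm (y - x) / r - l / 2 * (norm (y - x))\<^sup>2)"
      using r[OF that] by simp
    also have "\<dots> \<le> 1 + 1 / (2 * l * r\<^sup>2)"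
      using linear_minus_quadratic_le[OF \<open>l > 0\<close> \<open>r > 0\<close>] by simp
    finally show ?thesis .
  qed
  then show ?thesis by (intro bdd_aboveI2)
qed

lemma merit_gap_le_u_merit:
  fixes F :: "'m::finite \<Rightarrow> 'a::real_normed_vector \<Rightarrow> real"
  assumes "convex S" "\<And>i. convex_on S (F i)" "\<And>i. continuous_on S (F i)" "x \<in> S" "l > 0"
    and "y \<in> S"
  shows "merit_gap F l x y \<le> u_merit S F l x"
  unfolding u_merit_eq_SUP_merit_gap
  using cSUP_upper[OF \<open>y \<in> S\<close> bdd_above_merit_gap[OF assms(1-5)]] .

lemma u_merit_le_0_if_weakly_pareto_optimal:
  assumes "S \<noteq> {}" "l \<ge> 0" "weakly_pareto_optimal S F x"
  shows "u_merit S F l x \<le> 0"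
  unfolding u_merit_eq_SUP_merit_gap
proof (rule cSUP_least[OF \<open>S \<noteq> {}\<close>])
  fix y assume "y \<in> S"
  then obtain i where "F i y \<ge> F i x"
    using assms(3) unfolding weakly_pareto_optimal_def by (meson not_le)
  moreover have "l / 2 * (norm (x - y))\<^sup>2 \<ge> 0" using \<open>l \<ge> 0\<close> by simp
  ultimately show "merit_gap F l x y \<le> 0"
    using merit_gap_le[of F l x y i] by linarith
qed

lemma merit_gap_pos_if_dominated:
  fixes F :: "'m::finite \<Rightarrow> 'a::real_normed_vector \<Rightarrow> real"
  assumes "convex S" "\<And>i. convex_on S (F i)" "l > 0" "x \<in> S" "y \<in> S"
    and dom: "\<And>i. F i y < F i x"
  obtains z where "z \<in> S" "merit_gap F l x z > 0"
proof -
  define \<delta> where "\<delta> = Min (range (\<lambda>i. F i x - F i y))"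
  have "\<delta> > 0" unfolding \<delta>_def using dom by (subst Min_gr_iff) auto
  have \<delta>_le: "\<delta> \<le> F i x - F i y" for i unfolding \<delta>_def by (rule Min_le) auto
  define D where "D = norm (x - y)"
  have "D > 0" using dom[of undefined] by (auto simp: D_def)
  define t where "t = min 1 (\<delta> / (l * D\<^sup>2))"
  have t: "0 < t" "t \<le> 1" "t * (l * D\<^sup>2) \<le> \<delta>"
    using \<open>\<delta> > 0\<close> \<open>D > 0\<close> \<open>l > 0\<close> by (auto simp: t_def min_def field_simps)
  define z where "z = (1 - t) *\<^sub>R x + t *\<^sub>R y"
  have "z \<in> S" using assms(1,4,5) t by (simp add: z_def convexD)
  have "x - z = t *\<^sub>R (x - y)" by (simp add: z_def algebra_simps)
  then have norm_xz: "norm (x - z) = t * D" using t by (simp add: D_def)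
  have "F i x - F i z - l / 2 * (norm (x - z))\<^sup>2 > 0" for i
  proof -
    have "F i z \<le> (1 - t) * F i x + t * F i y"
      using convex_onD[OF assms(2), of t x y] t assms(4,5) by (simp add: z_def)
    then have "F i x - F i z \<ge> t * \<delta>"
      using mult_left_mono[OF \<delta>_le[of i], of t] t by (simp add: algebra_simps)
    moreover have "l / 2 * (norm (x - z))\<^sup>2 \<le> t * \<delta> / 2"
      using mult_left_mono[OF t(3), of t] t by (simp add: norm_xz power2_eq_square mult_ac)
    moreover have "t * \<delta> > 0" using t \<open>\<delta> > 0\<close> by simp
    ultimately show ?thesis by linarith
  qed
  then have "merit_gap F l x z > 0" unfolding merit_gap_pos_iff by blast
  with \<open>z \<in> S\<close> show thesis by (rule that)
qed

lemma u_merit_nonneg: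
  fixes F :: "'m::finite \<Rightarrow> 'a::real_normed_vector \<Rightarrow> real"
  assumes "convex S" "\<And>i. convex_on S (F i)" "\<And>i. continuous_on S (F i)" "x \<in> S" "l > 0"
  shows "u_merit S F l x \<ge> 0"
  using merit_gap_le_u_merit[of S F x l x] assms by simp

lemma u_merit_pos_if_not_weakly_pareto_optimal:
  fixes F :: "'m::finite \<Rightarrow> 'a::real_normed_vector \<Rightarrow> real"
  assumes "convex S" "\<And>i. convex_on S (F i)" "\<And>i. continuous_on S (F i)" "x \<in> S" "l > 0"
    and "\<not> weakly_pareto_optimal S F x"
  shows "u_merit S F l x > 0"
proof -
  obtain y where "y \<in> S" "\<And>i. F i y < F i x"
    using assms(4,6) unfolding weakly_pareto_optimal_def by blast
  then obtain z where "z \<in> S" "merit_gap F l x z > 0"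
    using merit_gap_pos_if_dominated[of S F l x y] assms(1,2,4,5) by blast
  then show ?thesis
    using merit_gap_le_u_merit[of S F x l z] assms by simp
qed

theorem theorem3p3:
  fixes S :: "'n::euclidean_space set"
    and F :: "'m::finite \<Rightarrow> 'n \<Rightarrow> real"
    and l :: real
  assumes "S \<noteq> {}" and "closed S" and "convex S"
    and "\<And>i. convex_on S (F i)"
    and "\<And>i. continuous_on S (F i)"
    and "l > 0"
  shows "(\<forall>x\<in>S. u_merit S F l x \<ge> 0) \<and>
         (\<forall>x\<in>S. weakly_pareto_optimal S F x \<longleftrightarrow> u_merit S F l x = 0)"
proof -
  have nonneg: "u_merit S F l x \<ge> 0" if "x \<in> S" for x
    using u_merit_nonneg[of S F x l] assms that by simp
  have "weakly_pareto_optimal S F x \<longleftrightarrow> u_merit S F l x = 0" if "x \<in> S" for x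
    using u_merit_le_0_if_weakly_pareto_optimal[OF assms(1) less_imp_le[OF assms(6)], of F x]
      u_merit_pos_if_not_weakly_pareto_optimal[of S F x l] assms that nonneg[OF that]
    by fastforce
  with nonneg show ?thesis by blast
qed

end
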